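(* Let $B$ be a nonzero real vector space, $\lfloor\cdot,\cdot\rfloor$ a symmetric bilinear form on $B$, $q(b):=\tfrac12\lfloor b,b\rfloor$, and let $f$ be a BC--function on $B$. Then ${\cal P}_q(f^@)={\cal P}_q(f)$.
   Context: For a proper convex $f\colon B\to\,]{-}\infty,\infty]$, $f^@(c):=\sup_{b\in B}[\lfloor b,c\rfloor-f(b)]$. A BC--function is a proper convex $f\colon B\to\,]{-}\infty,\infty]$ with $f^@(b)\ge f(b)\ge q(b)$ for all $b\in B$. For a function $h\ge q$ on $B$, ${\cal P}_q(h):=\{b\in B\colon h(b)=q(b)\}$. *)

theory Defs
  imports "HOL-Analysis.Analysis" "HOL-Library.Extended_Real"
begin

text \<open>Functions B \<rightarrow> ]-\<infinity>,\<infinity>] are modelled as ereal-valued functions never equal to -\<infinity>.\<close>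

definition proper_ereal :: "('b \<Rightarrow> ereal) \<Rightarrow> bool" where
  "proper_ereal f \<longleftrightarrow> (\<forall>b. f b \<noteq> -\<infinity>) \<and> (\<exists>b. f b \<noteq> \<infinity>)"

definition convex_ereal :: "('b::real_vector \<Rightarrow> ereal) \<Rightarrow> bool" where
  "convex_ereal f \<longleftrightarrow> (\<forall>x y. \<forall>t::real. 0 < t \<and> t < 1 \<longrightarrow>
      f (t *\<^sub>R x + (1 - t) *\<^sub>R y) \<le> ereal t * f x + ereal (1 - t) * f y)"

definition qf :: "('b \<Rightarrow> 'b \<Rightarrow> real) \<Rightarrow> 'b \<Rightarrow> real" where
  "qf bf b = (1/2) * bf b b"

definition fat :: "('b \<Rightarrow> 'b \<Rightarrow> real) \<Rightarrow> ('b \<Rightarrow> ereal) \<Rightarrow> 'b \<Rightarrow> ereal" where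
  "fat bf f c = (SUP b. ereal (bf b c) - f b)"

definition BC_function :: "('b::real_vector \<Rightarrow> 'b \<Rightarrow> real) \<Rightarrow> ('b \<Rightarrow> ereal) \<Rightarrow> bool" where
  "BC_function bf f \<longleftrightarrow> proper_ereal f \<and> convex_ereal f \<and>
     (\<forall>b. fat bf f b \<ge> f b \<and> f b \<ge> ereal (qf bf b))"

definition Pq :: "('b \<Rightarrow> 'b \<Rightarrow> real) \<Rightarrow> ('b \<Rightarrow> ereal) \<Rightarrow> 'b set" where
  "Pq bf h = {b. h b = ereal (qf bf b)}"

end

theory Submission
  imports Defs
begin

text \<open>If f is convex, f \<ge> q, and f(b) = q(b), then the gradient of q at b, namely
  c \<mapsto> \<lfloor>b, c\<rfloor>, is a subgradient of f at b: along the segment from b to c the convex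
  function f lies below its chord and above q, and comparing first-order terms as the
  segment shrinks gives f(c) \<ge> q(b) + \<lfloor>b, c - b\<rfloor>.  Inserting this into the
  definition of f^@ yields f^@(b) \<le> q(b), hence f^@(b) = q(b) since f^@ \<ge> f \<ge> q.
  The converse inclusion is immediate from q \<le> f \<le> f^@.\<close>

lemma le_of_forall_small_add_mult_le:
  fixes L Q R :: real
  assumes "\<And>t. 0 < t \<Longrightarrow> t < 1 \<Longrightarrow> L + t * Q \<le> R"
  shows "L \<le> R"
proof (rule tendsto_upperbound)
  show "((\<lambda>t. L + t * Q) \<longlongrightarrow> L) (at_right 0)"
    by (auto intro!: tendsto_eq_intros)
  show "\<forall>\<^sub>F t in at_right 0. L + t * Q \<le> R"
    by (rule eventually_mono[OF eventually_at_right_real[OF zero_less_one]]) (use assms in auto)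
qed simp

lemma qf_add_scaleR:
  assumes "bilinear bf" and "\<And>x y. bf x y = bf y x"
  shows "qf bf (b + t *\<^sub>R d) = qf bf b + t * bf b d + t\<^sup>2 * qf bf d"
proof -
  have "bf (b + t *\<^sub>R d) (b + t *\<^sub>R d) = bf b b + t * bf b d + t * (bf d b + t * bf d d)"
    using assms(1) by (simp add: bilinear_ladd bilinear_lmul bilinear_radd bilinear_rmul)
  then show ?thesis
    using assms(2)[of d b] by (simp add: qf_def power2_eq_square algebra_simps)
qed

lemma subgradient_at_contact_point:
  assumes "bilinear bf" and "\<And>x y. bf x y = bf y x"
    and "convex_ereal f" and above: "\<And>x. ereal (qf bf x) \<le> f x"
    and contact: "f b = ereal (qf bf b)"
  shows "ereal (qf bf b + bf b (c - b)) \<le> f c"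
proof (cases "f c")
  case (real r)
  have "bf b (c - b) + t * qf bf (c - b) \<le> r - qf bf b" if t: "0 < t" "t < 1" for t
  proof -
    have "ereal (qf bf (t *\<^sub>R c + (1 - t) *\<^sub>R b)) \<le> f (t *\<^sub>R c + (1 - t) *\<^sub>R b)"
      by (rule above)
    also have "\<dots> \<le> ereal t * f c + ereal (1 - t) * f b"
      using \<open>convex_ereal f\<close> t unfolding convex_ereal_def by blast
    also have "\<dots> = ereal (t * r + (1 - t) * qf bf b)"
      using real contact by simp
    finally have "qf bf (b + t *\<^sub>R (c - b)) \<le> t * r + (1 - t) * qf bf b"
      by (simp add: scaleR_diff_right algebra_simps)
    then have "qf bf b + t * bf b (c - b) + t\<^sup>2 * qf bf (c - b) \<le> t * r + (1 - t) * qf bf b"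
      by (simp only: qf_add_scaleR[OF assms(1,2)])
    then have "t * (bf b (c - b) + t * qf bf (c - b)) \<le> t * (r - qf bf b)"
      by (simp add: power2_eq_square algebra_simps)
    then show ?thesis
      using t by simp
  qed
  then have "bf b (c - b) \<le> r - qf bf b"
    by (rule le_of_forall_small_add_mult_le)
  then show ?thesis
    using real by simp
qed (use above[of c] in auto)

lemma fat_le_qf_at_contact_point:
  assumes "bilinear bf" and "\<And>x y. bf x y = bf y x"
    and "convex_ereal f" and "\<And>x. ereal (qf bf x) \<le> f x"
    and "f b = ereal (qf bf b)"
  shows "fat bf f b \<le> ereal (qf bf b)"
  unfolding fat_def
proof (rule SUP_least)
  fix c
  have "ereal (bf c b) - f c \<le> ereal (bf c b) - ereal (qf bf b + bf b (c - b))"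
    using subgradient_at_contact_point[OF assms] by (rule ereal_minus_mono[OF order_refl])
  also have "\<dots> = ereal (qf bf b)"
    using assms(1) assms(2)[of c b] by (simp add: bilinear_rsub qf_def)
  finally show "ereal (bf c b) - f c \<le> ereal (qf bf b)" .
qed

theorem lemma3p10:
  fixes bf :: "'b::real_vector \<Rightarrow> 'b \<Rightarrow> real" and f :: "'b \<Rightarrow> ereal"
  assumes "\<exists>b::'b. b \<noteq> 0"
    and "bilinear bf"
    and "\<And>x y. bf x y = bf y x"
    and "BC_function bf f"
  shows "Pq bf (fat bf f) = Pq bf f"
proof -
  have fat_ge: "\<And>b. f b \<le> fat bf f b" and q_le: "\<And>b. ereal (qf bf b) \<le> f b"
    and "convex_ereal f"
    using assms(4) unfolding BC_function_def by auto
  have "fat bf f b = ereal (qf bf b) \<longleftrightarrow> f b = ereal (qf bf b)" for b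
    using fat_le_qf_at_contact_point[OF assms(2,3) \<open>convex_ereal f\<close> q_le, of b]
      fat_ge[of b] q_le[of b] by (metis order_antisym order_trans)
  then show ?thesis
    unfolding Pq_def by blast
qed

end
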